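(* Let $R$ be a ring such that $R/J(R)$ is an abelian $\pi$-regular ring. Then $R$ is feckly clean.
   Context: Rings are associative with identity, not necessarily commutative; $J(R)$ is the Jacobson radical. A ring is abelian if all its idempotents are central. A ring $S$ is $\pi$-regular if for every $a\in S$ there is $n\in\mathbb{N}$ with $a^n\in a^nSa^n$. An element $u\in R$ is full if $RuR=R$. An element $a\in R$ is feckly clean if there exist $e\in R$ and a full element $u\in R$ with $a=e+u$ and $eR(1-e)\subseteq J(R)$; $R$ is feckly clean if every element is feckly clean. *)

theory Defs
  imports "HOL-Algebra.Algebra"
begin

definition left_ideal :: "'a set \<Rightarrow> ('a, 'b) ring_scheme \<Rightarrow> bool" where
  "left_ideal I R \<longleftrightarrow> additive_subgroup I R \<and>
     (\<forall>a \<in> carrier R. \<forall>x \<in> I. a \<otimes>\<^bsub>R\<^esub> x \<in> I)"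

definition maximal_left_ideal :: "'a set \<Rightarrow> ('a, 'b) ring_scheme \<Rightarrow> bool" where
  "maximal_left_ideal I R \<longleftrightarrow> left_ideal I R \<and> I \<noteq> carrier R \<and>
     (\<forall>L. left_ideal L R \<and> I \<subseteq> L \<longrightarrow> L = I \<or> L = carrier R)"

definition jacobson :: "('a, 'b) ring_scheme \<Rightarrow> 'a set" where
  "jacobson R = carrier R \<inter> \<Inter>{I. maximal_left_ideal I R}"

definition abelian_ring :: "('a, 'b) ring_scheme \<Rightarrow> bool" where
  "abelian_ring S \<longleftrightarrow> (\<forall>e \<in> carrier S. e \<otimes>\<^bsub>S\<^esub> e = e \<longrightarrow>
     (\<forall>x \<in> carrier S. e \<otimes>\<^bsub>S\<^esub> x = x \<otimes>\<^bsub>S\<^esub> e))"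

definition pi_regular :: "('a, 'b) ring_scheme \<Rightarrow> bool" where
  "pi_regular S \<longleftrightarrow> (\<forall>a \<in> carrier S. \<exists>n::nat. n > 0 \<and>
     (\<exists>b \<in> carrier S. a [^]\<^bsub>S\<^esub> n = a [^]\<^bsub>S\<^esub> n \<otimes>\<^bsub>S\<^esub> b \<otimes>\<^bsub>S\<^esub> a [^]\<^bsub>S\<^esub> n))"

text \<open>u is full if RuR = R, i.e. the two-sided ideal generated by u is R.\<close>
definition full_elem :: "('a, 'b) ring_scheme \<Rightarrow> 'a \<Rightarrow> bool" where
  "full_elem R u \<longleftrightarrow> u \<in> carrier R \<and> Idl\<^bsub>R\<^esub> {u} = carrier R"

definition feckly_clean_elem :: "('a, 'b) ring_scheme \<Rightarrow> 'a \<Rightarrow> bool" where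
  "feckly_clean_elem R a \<longleftrightarrow> (\<exists>e \<in> carrier R. \<exists>u \<in> carrier R.
     a = e \<oplus>\<^bsub>R\<^esub> u \<and> full_elem R u \<and>
     (\<forall>r \<in> carrier R. e \<otimes>\<^bsub>R\<^esub> r \<otimes>\<^bsub>R\<^esub> (\<one>\<^bsub>R\<^esub> \<ominus>\<^bsub>R\<^esub> e) \<in> jacobson R))"

definition feckly_clean :: "('a, 'b) ring_scheme \<Rightarrow> bool" where
  "feckly_clean R \<longleftrightarrow> (\<forall>a \<in> carrier R. feckly_clean_elem R a)"

end

theory Submission
  imports Defs
begin

(* Write J for the Jacobson radical of R, defined as the intersection of the
   maximal left ideals, and S = R/J.
   (1) In an abelian pi-regular ring every element x is f + v with f a central idempotent
       (so f S (1 - f) = 0) and v right invertible: if x^n = x^n b x^n, then e = x^n b is a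
       central idempotent, f = 1 - e kills x^n, so f x is nilpotent and 1 - f x is right
       invertible; an explicit right inverse of x - f is e x^(n-1) b - f (1 - f x)^(-1).
   (2) Such a decomposition of the image of a in S lifts to a = e + u in R: the condition
       f S (1 - f) = 0 says e R (1 - e) lies in J, and v w = 1 says 1 - u w lies in J.
       An element u with 1 - u w in J is full, since a left ideal containing u w and
       contained in a maximal left ideal M would contain 1 = (1 - u w) + u w. *)

section \<open>Left ideals\<close>

context ring begin

lemma left_idealI:
  assumes "I \<subseteq> carrier R" "\<zero> \<in> I" "\<And>a b. a \<in> I \<Longrightarrow> b \<in> I \<Longrightarrow> a \<oplus> b \<in> I"
    "\<And>a x. a \<in> carrier R \<Longrightarrow> x \<in> I \<Longrightarrow> a \<otimes> x \<in> I"
  shows "left_ideal I R"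
proof -
  have neg: "\<ominus> x \<in> I" if "x \<in> I" for x
  proof -
    have "\<ominus> x = (\<ominus> \<one>) \<otimes> x" using that assms(1) by (auto simp: l_minus)
    thus ?thesis using assms(4) that by simp
  qed
  have "subgroup I (add_monoid R)"
    by (rule subgroup.intro) (use assms neg in \<open>auto simp: a_inv_def\<close>)
  thus ?thesis unfolding left_ideal_def using assms(4) by (auto intro: additive_subgroupI)
qed

lemma left_idealD:
  assumes "left_ideal I R"
  shows "I \<subseteq> carrier R" "\<zero> \<in> I" "\<And>a b. a \<in> I \<Longrightarrow> b \<in> I \<Longrightarrow> a \<oplus> b \<in> I"
    "\<And>a x. a \<in> carrier R \<Longrightarrow> x \<in> I \<Longrightarrow> a \<otimes> x \<in> I"
  using assms unfolding left_ideal_def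
  by (auto dest: additive_subgroup.a_subset additive_subgroup.zero_closed additive_subgroup.a_closed)

lemma ideal_imp_left_ideal: "ideal I R \<Longrightarrow> left_ideal I R"
  unfolding left_ideal_def by (blast dest: ideal.axioms(1) ideal.I_l_closed)

lemma left_ideal_one:
  assumes "left_ideal I R" "\<one> \<in> I" shows "I = carrier R"
proof -
  have "x \<in> I" if "x \<in> carrier R" for x
    using left_idealD(4)[OF assms(1) that assms(2)] that by simp
  thus ?thesis using left_idealD(1)[OF assms(1)] by blast
qed

lemma colon_left_ideal:
  assumes "left_ideal M R" "r \<in> carrier R"
  shows "left_ideal {x \<in> carrier R. x \<otimes> r \<in> M} R"
  using left_idealD[OF assms(1)] assms(2) by (intro left_idealI) (auto simp: l_distr m_assoc)

lemma sum_left_ideal: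
  assumes "left_ideal M R" "c \<in> carrier R"
  shows "left_ideal {m \<oplus> y \<otimes> c | m y. m \<in> M \<and> y \<in> carrier R} R"
proof (rule left_idealI)
  note M = left_idealD[OF assms(1)]
  let ?K = "{m \<oplus> y \<otimes> c | m y. m \<in> M \<and> y \<in> carrier R}"
  show "?K \<subseteq> carrier R" using M(1) assms(2) by auto
  have "\<zero> = \<zero> \<oplus> \<zero> \<otimes> c" using assms(2) by simp
  thus "\<zero> \<in> ?K" using M(2) by blast
  show "a \<oplus> b \<in> ?K" if a: "a \<in> ?K" and b: "b \<in> ?K" for a b
  proof -
    obtain m1 y1 where "a = m1 \<oplus> y1 \<otimes> c" "m1 \<in> M" "y1 \<in> carrier R" using a by blast
    moreover obtain m2 y2 where "b = m2 \<oplus> y2 \<otimes> c" "m2 \<in> M" "y2 \<in> carrier R"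
      using b by blast
    ultimately have h: "a = m1 \<oplus> y1 \<otimes> c" "b = m2 \<oplus> y2 \<otimes> c"
      "m1 \<in> M" "y1 \<in> carrier R" "m2 \<in> M" "y2 \<in> carrier R" by blast+
    have "a \<oplus> b = (m1 \<oplus> m2) \<oplus> (y1 \<oplus> y2) \<otimes> c"
      using h M(1) assms(2) by (simp add: l_distr a_ac subsetD)
    thus ?thesis using h M(3) by blast
  qed
  show "a \<otimes> x \<in> ?K" if a: "a \<in> carrier R" and x: "x \<in> ?K" for a x
  proof -
    obtain m y where h: "x = m \<oplus> y \<otimes> c" "m \<in> M" "y \<in> carrier R" using x by blast
    have "a \<otimes> x = a \<otimes> m \<oplus> (a \<otimes> y) \<otimes> c"
      using h M(1) assms(2) a by (simp add: r_distr m_assoc subsetD)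
    thus ?thesis using h M(4) a by blast
  qed
qed

text \<open>If \<open>r \<notin> M\<close> for a maximal left ideal \<open>M\<close>, then \<open>(M : r)\<close> is again maximal: a left ideal
  strictly above \<open>(M : r)\<close> contains some \<open>x\<close> with \<open>M + R x r = R\<close>, which forces it to be \<open>R\<close>.\<close>
lemma colon_maximal:
  assumes M: "maximal_left_ideal M R" and r: "r \<in> carrier R" "r \<notin> M"
  shows "maximal_left_ideal {x \<in> carrier R. x \<otimes> r \<in> M} R"
proof -
  let ?L = "{x \<in> carrier R. x \<otimes> r \<in> M}"
  have Ml: "left_ideal M R"
    and Mmax: "\<And>L. left_ideal L R \<Longrightarrow> M \<subseteq> L \<Longrightarrow> L = M \<or> L = carrier R"
    using M unfolding maximal_left_ideal_def by auto
  note D = left_idealD[OF Ml]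
  have "L = carrier R" if L: "left_ideal L R" "?L \<subseteq> L" "L \<noteq> ?L" for L
  proof -
    obtain x where x: "x \<in> L" "x \<notin> ?L" using L(2,3) by blast
    have xc: "x \<in> carrier R" using x(1) left_idealD(1)[OF L(1)] by blast
    let ?K = "{m \<oplus> y \<otimes> (x \<otimes> r) | m y. m \<in> M \<and> y \<in> carrier R}"
    have Kl: "left_ideal ?K R" by (rule sum_left_ideal[OF Ml]) (use xc r in simp)
    have MK: "M \<subseteq> ?K"
    proof
      fix m assume m: "m \<in> M"
      have "m = m \<oplus> \<zero> \<otimes> (x \<otimes> r)" using m D(1) xc r by auto
      thus "m \<in> ?K" using m by blast
    qed
    have "x \<otimes> r = \<zero> \<oplus> \<one> \<otimes> (x \<otimes> r)" using xc r by simp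
    hence "x \<otimes> r \<in> ?K" using D(2) by blast
    hence "?K = carrier R" using Mmax[OF Kl MK] x(2) xc by blast
    have "z \<in> L" if zc: "z \<in> carrier R" for z
    proof -
      have "z \<otimes> r \<in> ?K" using \<open>?K = carrier R\<close> zc r by simp
      then obtain m y where my: "z \<otimes> r = m \<oplus> y \<otimes> (x \<otimes> r)" "m \<in> M" "y \<in> carrier R" by blast
      have mc: "m \<in> carrier R" using my(2) D(1) by blast
      have "(z \<ominus> y \<otimes> x) \<otimes> r = z \<otimes> r \<ominus> y \<otimes> (x \<otimes> r)"
        using zc my(3) xc r by algebra
      also have "\<dots> = m" using my(1,3) mc xc r by simp algebra
      finally have "(z \<ominus> y \<otimes> x) \<otimes> r = m" .
      hence "z \<ominus> y \<otimes> x \<in> L" using L(2) my zc xc by auto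
      moreover have "y \<otimes> x \<in> L" using left_idealD(4)[OF L(1) my(3) x(1)] .
      moreover have "z = (z \<ominus> y \<otimes> x) \<oplus> y \<otimes> x" using zc my(3) xc by algebra
      ultimately show ?thesis using left_idealD(3)[OF L(1)] by metis
    qed
    thus "L = carrier R" using left_idealD(1)[OF L(1)] by blast
  qed
  moreover have "left_ideal ?L R" by (rule colon_left_ideal[OF Ml r(1)])
  moreover have "\<one> \<notin> ?L" using r by simp
  ultimately show ?thesis unfolding maximal_left_ideal_def by blast
qed

section \<open>The Jacobson radical is a two-sided ideal\<close>

lemma jacobson_left_ideal: "left_ideal (jacobson R) R"
  using left_idealD unfolding jacobson_def maximal_left_ideal_def
  by (intro left_idealI) auto

text \<open>Right multiplication preserves \<open>J\<close>: for \<open>r \<notin> M\<close> use the maximal left ideal \<open>(M : r)\<close>.\<close>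
lemma jacobson_r_closed:
  assumes j: "j \<in> jacobson R" and r: "r \<in> carrier R"
  shows "j \<otimes> r \<in> jacobson R"
proof -
  have jc: "j \<in> carrier R" using j unfolding jacobson_def by blast
  have "j \<otimes> r \<in> M" if M: "maximal_left_ideal M R" for M
  proof (cases "r \<in> M")
    case True
    then show ?thesis using M left_idealD(4)[OF _ jc True] unfolding maximal_left_ideal_def by blast
  next
    case False
    have "maximal_left_ideal {x \<in> carrier R. x \<otimes> r \<in> M} R" by (rule colon_maximal[OF M r False])
    thus ?thesis using j unfolding jacobson_def by blast
  qed
  thus ?thesis using jc r unfolding jacobson_def by auto
qed

lemma jacobson_ideal: "ideal (jacobson R) R"
  using jacobson_left_ideal jacobson_r_closed left_idealD(4)[OF jacobson_left_ideal]
  unfolding left_ideal_def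
  by (intro ideal.intro ideal_axioms.intro) (auto intro: ring_axioms)

lemma chain_union_left_ideal:
  assumes C: "C \<noteq> {}" "\<And>L. L \<in> C \<Longrightarrow> left_ideal L R"
    and chain: "\<And>A B. A \<in> C \<Longrightarrow> B \<in> C \<Longrightarrow> A \<subseteq> B \<or> B \<subseteq> A"
  shows "left_ideal (\<Union>C) R"
proof (rule left_idealI)
  show "\<Union>C \<subseteq> carrier R" "\<zero> \<in> \<Union>C" using left_idealD(1,2)[OF C(2)] C(1) by blast+
  show "a \<otimes> x \<in> \<Union>C" if "a \<in> carrier R" "x \<in> \<Union>C" for a x
    using that left_idealD(4)[OF C(2)] by blast
  show "a \<oplus> b \<in> \<Union>C" if a: "a \<in> \<Union>C" and b: "b \<in> \<Union>C" for a b
  proof -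
    obtain A where A: "A \<in> C" "a \<in> A" using a by blast
    obtain B where B: "B \<in> C" "b \<in> B" using b by blast
    show ?thesis
    proof (cases "A \<subseteq> B")
      case True
      thus ?thesis using left_idealD(3)[OF C(2)[OF B(1)]] A B by blast
    next
      case False
      hence "B \<subseteq> A" using chain[OF A(1) B(1)] by blast
      thus ?thesis using left_idealD(3)[OF C(2)[OF A(1)]] A B by blast
    qed
  qed
qed

lemma exists_maximal_left_ideal:
  assumes I: "left_ideal I R" and one: "\<one> \<notin> I"
  shows "\<exists>M. maximal_left_ideal M R \<and> I \<subseteq> M"
proof -
  define P where "P = {L. left_ideal L R \<and> I \<subseteq> L \<and> \<one> \<notin> L}"
  have bound: "\<exists>U\<in>P. \<forall>L\<in>C. L \<subseteq> U" if C: "C \<in> chains P" for C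
  proof (cases "C = {}")
    case True
    then show ?thesis using I one unfolding P_def by blast
  next
    case False
    have CP: "C \<subseteq> P" using chainsD2[OF C] .
    have "left_ideal (\<Union>C) R"
    proof (rule chain_union_left_ideal[OF False])
      show "left_ideal L R" if "L \<in> C" for L using that CP unfolding P_def by blast
      show "A \<subseteq> B \<or> B \<subseteq> A" if "A \<in> C" "B \<in> C" for A B using chainsD[OF C that] .
    qed
    moreover have "I \<subseteq> \<Union>C" "\<one> \<notin> \<Union>C" using CP False unfolding P_def by blast+
    ultimately have "\<Union>C \<in> P" unfolding P_def by blast
    thus ?thesis by blast
  qed
  have "\<exists>M\<in>P. \<forall>L\<in>P. M \<subseteq> L \<longrightarrow> L = M" using Zorn_Lemma2[of P] bound by blast
  then obtain M where M: "M \<in> P" "\<And>L. L \<in> P \<Longrightarrow> M \<subseteq> L \<Longrightarrow> L = M" by blast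
  have "L = M \<or> L = carrier R" if L: "left_ideal L R" "M \<subseteq> L" for L
  proof (cases "\<one> \<in> L")
    case True
    thus ?thesis using left_ideal_one[OF L(1)] by blast
  next
    case False
    hence "L \<in> P" using L M(1) unfolding P_def by blast
    thus ?thesis using M(2) L(2) by blast
  qed
  moreover have "left_ideal M R" "\<one> \<notin> M" "I \<subseteq> M" using M(1) unfolding P_def by blast+
  ultimately show ?thesis unfolding maximal_left_ideal_def by blast
qed

lemma left_ideal_one_minus_jacobson:
  assumes I: "left_ideal I R" and y: "y \<in> I" "\<one> \<ominus> y \<in> jacobson R"
  shows "I = carrier R"
proof (rule ccontr)
  assume "I \<noteq> carrier R"
  hence "\<one> \<notin> I" using left_ideal_one[OF I] by blast
  then obtain M where M: "maximal_left_ideal M R" "I \<subseteq> M"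
    using exists_maximal_left_ideal[OF I] by blast
  have Ml: "left_ideal M R" using M(1) unfolding maximal_left_ideal_def by blast
  have "(\<one> \<ominus> y) \<oplus> y \<in> M"
    using y M left_idealD(3)[OF Ml] unfolding jacobson_def by blast
  moreover have "y \<in> carrier R" using y(1) left_idealD(1)[OF I] by blast
  hence "(\<one> \<ominus> y) \<oplus> y = \<one>" by algebra
  ultimately have "M = carrier R" using left_ideal_one[OF Ml] by simp
  thus False using M(1) unfolding maximal_left_ideal_def by blast
qed

lemma full_if_right_invertible_mod_jacobson:
  assumes u: "u \<in> carrier R" and w: "w \<in> carrier R" and uw: "\<one> \<ominus> u \<otimes> w \<in> jacobson R"
  shows "full_elem R u"
proof -
  have I: "ideal (Idl {u}) R" using genideal_ideal u by simp
  have "u \<otimes> w \<in> Idl {u}" using ideal.I_r_closed[OF I genideal_self'[OF u] w] .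
  thus ?thesis unfolding full_elem_def
    using left_ideal_one_minus_jacobson[OF ideal_imp_left_ideal[OF I] _ uw] u by blast
qed

section \<open>Decomposition in abelian pi-regular rings\<close>

lemma idempotent_complement:
  assumes e: "e \<in> carrier R" "e \<otimes> e = e"
  shows "e \<otimes> (\<one> \<ominus> e) = \<zero>" "(\<one> \<ominus> e) \<otimes> e = \<zero>" "(\<one> \<ominus> e) \<otimes> (\<one> \<ominus> e) = \<one> \<ominus> e"
proof -
  show "e \<otimes> (\<one> \<ominus> e) = \<zero>" "(\<one> \<ominus> e) \<otimes> e = \<zero>"
    using e by (simp_all add: minus_eq r_distr l_distr r_minus l_minus r_neg)
  thus "(\<one> \<ominus> e) \<otimes> (\<one> \<ominus> e) = \<one> \<ominus> e"
    using e by (simp add: minus_eq l_distr l_minus)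
qed

text \<open>Geometric series: \<open>(\<one> \<ominus> N) (\<one> \<oplus> N \<oplus> \<dots> \<oplus> N^(k-1)) = \<one> \<ominus> N^k\<close>.\<close>
lemma geometric_series_factor:
  assumes N: "N \<in> carrier R"
  shows "\<exists>G\<in>carrier R. (\<one> \<ominus> N) \<otimes> G = \<one> \<ominus> N [^] (k::nat)"
proof (induction k)
  case 0 show ?case using N by (intro bexI[of _ \<zero>]) (auto simp: minus_eq r_neg)
next
  case (Suc k)
  then obtain G where G: "G \<in> carrier R" "(\<one> \<ominus> N) \<otimes> G = \<one> \<ominus> N [^] k" by blast
  have "(\<one> \<ominus> N) \<otimes> (G \<oplus> N [^] k) = (\<one> \<ominus> N [^] k) \<oplus> (\<one> \<ominus> N) \<otimes> N [^] k"
    using G N by (simp add: r_distr)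
  also have "\<dots> = \<one> \<ominus> N \<otimes> N [^] k" using N nat_pow_closed[OF N, of k] by algebra
  also have "N \<otimes> N [^] k = N [^] Suc k" using nat_pow_Suc2[OF N] by simp
  finally show ?case using G N by blast
qed

lemma nilpotent_one_minus_right_invertible:
  assumes N: "N \<in> carrier R" and nil: "N [^] (n::nat) = \<zero>"
  shows "\<exists>G\<in>carrier R. (\<one> \<ominus> N) \<otimes> G = \<one>"
  using geometric_series_factor[OF N, of n] nil by (simp add: minus_eq)

lemma central_idempotent_corner:
  assumes f: "f \<in> carrier R" "f \<otimes> f = f" and y: "y \<in> carrier R" "f \<otimes> y = y \<otimes> f"
  shows "f \<otimes> y \<otimes> (\<one> \<ominus> f) = \<zero>"
  using idempotent_complement[OF f] f(1) y by (simp add: m_assoc)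

lemma central_idempotent_complement:
  assumes e: "e \<in> carrier R" "e \<otimes> e = e" "\<And>y. y \<in> carrier R \<Longrightarrow> e \<otimes> y = y \<otimes> e"
    and y: "y \<in> carrier R"
  shows "(\<one> \<ominus> e) \<otimes> y = y \<otimes> (\<one> \<ominus> e)"
  using e(1) e(3)[OF y] y by (simp add: minus_eq l_distr r_distr l_minus r_minus)

lemma central_idempotent_power:
  assumes f: "f \<in> carrier R" "f \<otimes> f = f" "\<And>y. y \<in> carrier R \<Longrightarrow> f \<otimes> y = y \<otimes> f"
    and x: "x \<in> carrier R"
  shows "(f \<otimes> x) [^] Suc k = f \<otimes> x [^] Suc k"
proof (induction k)
  case 0 show ?case using f(1) x by simp
next
  case (Suc k)
  define p where "p = x [^] Suc k"
  have p: "p \<in> carrier R" using x p_def by simp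
  have "(f \<otimes> x) [^] Suc (Suc k) = (f \<otimes> p) \<otimes> (f \<otimes> x)"
    using Suc by (simp only: nat_pow_Suc p_def)
  also have "\<dots> = f \<otimes> (p \<otimes> f) \<otimes> x" using f(1) p x by (simp only: m_assoc m_closed)
  also have "\<dots> = (f \<otimes> f) \<otimes> (p \<otimes> x)"
    using f(1) p x by (simp only: f(3)[OF p, symmetric] m_assoc m_closed)
  also have "\<dots> = f \<otimes> x [^] Suc (Suc k)" by (simp only: f(2) p_def nat_pow_Suc)
  finally show ?case .
qed

text \<open>The property of the image of an element that is lifted to a feckly clean
  decomposition: a sum of a right invertible element and an element \<open>f\<close> with
  \<open>f S (\<one> - f) = 0\<close>.\<close>
definition corner_unit_sum :: "'a \<Rightarrow> bool" where
  "corner_unit_sum x \<longleftrightarrow> (\<exists>f\<in>carrier R. \<exists>v\<in>carrier R. \<exists>w\<in>carrier R.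
     x = f \<oplus> v \<and> v \<otimes> w = \<one> \<and> (\<forall>y\<in>carrier R. f \<otimes> y \<otimes> (\<one> \<ominus> f) = \<zero>))"

lemma abelian_pi_regular_corner_unit_sum:
  assumes ab: "abelian_ring R" and pr: "pi_regular R" and x: "x \<in> carrier R"
  shows "corner_unit_sum x"
proof -
  obtain n :: nat and b where nb: "n > 0" "b \<in> carrier R" "x [^] n = x [^] n \<otimes> b \<otimes> x [^] n"
    using pr x unfolding pi_regular_def by blast
  obtain m where m: "n = Suc m" using nb(1) not0_implies_Suc by blast
  define e where "e = x [^] n \<otimes> b"
  have ec: "e \<in> carrier R" using x nb(2) e_def by simp
  have ep: "e \<otimes> x [^] n = x [^] n" using nb(3) e_def by simp
  have ee: "e \<otimes> e = e" using ep x nb(2) e_def by (simp add: m_assoc[symmetric])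
  have ecent: "\<And>y. y \<in> carrier R \<Longrightarrow> e \<otimes> y = y \<otimes> e"
    using ab ec ee unfolding abelian_ring_def by blast
  define f where "f = \<one> \<ominus> e"
  have fc: "f \<in> carrier R" using ec f_def by simp
  have fcent: "\<And>y. y \<in> carrier R \<Longrightarrow> f \<otimes> y = y \<otimes> f"
    using central_idempotent_complement[OF ec ee ecent] f_def by blast
  have fe: "f \<otimes> e = \<zero>" and ff: "f \<otimes> f = f"
    using idempotent_complement[OF ec ee] f_def by simp_all
  text \<open>\<open>f\<close> annihilates \<open>x^n\<close>, hence \<open>f x\<close> is nilpotent and \<open>\<one> \<ominus> f x\<close> right invertible.\<close>
  have "f \<otimes> x [^] n = (f \<otimes> e) \<otimes> x [^] n" using ep fc ec x by (simp add: m_assoc)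
  hence "f \<otimes> x [^] n = \<zero>" using fe x by simp
  hence "(f \<otimes> x) [^] n = \<zero>" using central_idempotent_power[OF fc ff fcent x] m by simp
  then obtain G where G: "G \<in> carrier R" "(\<one> \<ominus> f \<otimes> x) \<otimes> G = \<one>"
    using nilpotent_one_minus_right_invertible[of "f \<otimes> x"] fc x by blast
  define q where "q = x [^] m \<otimes> b"
  have qc: "q \<in> carrier R" using q_def x nb(2) by simp
  have xeq: "x \<otimes> e \<otimes> q = e"
  proof -
    have "x \<otimes> e \<otimes> q = e \<otimes> x \<otimes> q" using ecent[OF x] by simp
    also have "\<dots> = e \<otimes> ((x \<otimes> x [^] m) \<otimes> b)" using x ec nb(2) q_def by (simp add: m_assoc)
    finally have "x \<otimes> e \<otimes> q = e \<otimes> ((x \<otimes> x [^] m) \<otimes> b)" .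
    thus ?thesis using ee nat_pow_Suc2[OF x, of m] m e_def by simp
  qed
  have xfG: "x \<otimes> f \<otimes> G = f \<otimes> G \<ominus> f"
  proof -
    have "f = f \<otimes> ((\<one> \<ominus> f \<otimes> x) \<otimes> G)" using G fc by simp
    also have "\<dots> = f \<otimes> G \<ominus> f \<otimes> x \<otimes> G"
      using fc x G(1) ff by (simp add: minus_eq l_distr r_distr l_minus r_minus m_assoc[symmetric])
    finally have "f \<otimes> G \<ominus> f = f \<otimes> G \<ominus> (f \<otimes> G \<ominus> f \<otimes> x \<otimes> G)" by simp
    also have "\<dots> = f \<otimes> x \<otimes> G" using fc x G(1) by algebra
    finally show ?thesis using fcent[OF x] by simp
  qed
  define v where "v = x \<ominus> f"
  define w where "w = e \<otimes> q \<ominus> f \<otimes> G"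
  have "v \<otimes> w = x \<otimes> e \<otimes> q \<ominus> x \<otimes> f \<otimes> G \<ominus> (f \<otimes> e) \<otimes> q \<oplus> (f \<otimes> f) \<otimes> G"
    using v_def w_def x fc ec qc G by algebra
  also have "\<dots> = e \<oplus> f" using xeq xfG fe ff ec fc x G qc by simp algebra
  also have "\<dots> = \<one>" using ec unfolding f_def by algebra
  finally have "v \<otimes> w = \<one>" .
  moreover have "x = f \<oplus> v" using v_def x fc by algebra
  moreover have "f \<otimes> y \<otimes> (\<one> \<ominus> f) = \<zero>" if "y \<in> carrier R" for y
    using central_idempotent_corner[OF fc ff that fcent[OF that]] .
  moreover have "v \<in> carrier R" "w \<in> carrier R" using v_def w_def fc x ec qc G(1) by simp_all
  ultimately show ?thesis unfolding corner_unit_sum_def using fc by blast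
qed

end

section \<open>Lifting from the quotient by the Jacobson radical\<close>

context ideal begin

lemma rcos_surj: "A \<in> carrier (R Quot I) \<Longrightarrow> \<exists>x\<in>carrier R. A = I +> x"
  unfolding FactRing_def A_RCOSETS_def' by auto

lemma rcos_minus:
  assumes "x \<in> carrier R" "y \<in> carrier R"
  shows "I +> (x \<ominus> y) = (I +> x) \<ominus>\<^bsub>R Quot I\<^esub> (I +> y)"
proof -
  interpret h: ring_hom_ring R "R Quot I" "(+>) I" by (rule rcos_ring_hom_ring)
  show ?thesis using assms by (simp add: a_minus_def h.hom_add h.hom_a_inv)
qed

lemma rcos_eq_zero_imp_mem: "x \<in> carrier R \<Longrightarrow> I +> x = \<zero>\<^bsub>R Quot I\<^esub> \<Longrightarrow> x \<in> I"
  using rcos_const_imp_mem unfolding FactRing_def by simp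

end

context ring begin

lemma feckly_clean_elem_if_quotient_corner_unit_sum:
  assumes a: "a \<in> carrier R"
    and dec: "ring.corner_unit_sum (R Quot jacobson R) (jacobson R +> a)"
  shows "feckly_clean_elem R a"
proof -
  let ?J = "jacobson R" and ?S = "R Quot jacobson R"
  interpret J: ideal ?J R by (rule jacobson_ideal)
  interpret S: ring ?S by (rule J.quotient_is_ring)
  interpret h: ring_hom_ring R ?S "(+>) ?J" by (rule J.rcos_ring_hom_ring)
  obtain F V W where FVW: "F \<in> carrier ?S" "V \<in> carrier ?S" "W \<in> carrier ?S"
    "?J +> a = F \<oplus>\<^bsub>?S\<^esub> V" "V \<otimes>\<^bsub>?S\<^esub> W = \<one>\<^bsub>?S\<^esub>"
    "\<forall>y\<in>carrier ?S. F \<otimes>\<^bsub>?S\<^esub> y \<otimes>\<^bsub>?S\<^esub> (\<one>\<^bsub>?S\<^esub> \<ominus>\<^bsub>?S\<^esub> F) = \<zero>\<^bsub>?S\<^esub>"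
    using dec unfolding S.corner_unit_sum_def by blast
  obtain e where e: "e \<in> carrier R" "F = ?J +> e" using J.rcos_surj[OF FVW(1)] by blast
  obtain w where w: "w \<in> carrier R" "W = ?J +> w" using J.rcos_surj[OF FVW(3)] by blast
  define u where "u = a \<ominus> e"
  have uc: "u \<in> carrier R" using u_def a e by simp
  have aeu: "a = e \<oplus> u" using u_def a e(1) by algebra
  have hu: "?J +> u = V" using J.rcos_minus[OF a e(1)] FVW(1,2,4) e(2) u_def by simp algebra
  have "?J +> (\<one> \<ominus> u \<otimes> w) = \<zero>\<^bsub>?S\<^esub>"
    using J.rcos_minus[of \<one> "u \<otimes> w"] uc w hu FVW(5) by (simp add: S.minus_eq S.r_neg)
  hence "\<one> \<ominus> u \<otimes> w \<in> ?J" using J.rcos_eq_zero_imp_mem uc w by simp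
  hence full: "full_elem R u" using full_if_right_invertible_mod_jacobson uc w(1) by blast
  have "e \<otimes> r \<otimes> (\<one> \<ominus> e) \<in> ?J" if r: "r \<in> carrier R" for r
  proof -
    have "?J +> (e \<otimes> r \<otimes> (\<one> \<ominus> e)) = F \<otimes>\<^bsub>?S\<^esub> (?J +> r) \<otimes>\<^bsub>?S\<^esub> (\<one>\<^bsub>?S\<^esub> \<ominus>\<^bsub>?S\<^esub> F)"
      using J.rcos_minus[of \<one> e] e r by simp
    also have "\<dots> = \<zero>\<^bsub>?S\<^esub>" using FVW(6) r by simp
    finally show ?thesis using J.rcos_eq_zero_imp_mem e r by simp
  qed
  thus ?thesis unfolding feckly_clean_elem_def using e(1) uc aeu full by blast
qed

end

theorem theorem4p1:
  fixes R :: "('a, 'b) ring_scheme"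
  assumes "ring R"
    and "abelian_ring (R Quot jacobson R)"
    and "pi_regular (R Quot jacobson R)"
  shows "feckly_clean R"
proof -
  interpret R: ring R by fact
  interpret J: ideal "jacobson R" R by (rule R.jacobson_ideal)
  interpret S: ring "R Quot jacobson R" by (rule J.quotient_is_ring)
  have "feckly_clean_elem R a" if "a \<in> carrier R" for a
  proof -
    have "jacobson R +>\<^bsub>R\<^esub> a \<in> carrier (R Quot jacobson R)"
      using that unfolding FactRing_def A_RCOSETS_def' by auto
    hence "S.corner_unit_sum (jacobson R +>\<^bsub>R\<^esub> a)"
      using S.abelian_pi_regular_corner_unit_sum assms(2,3) by blast
    thus ?thesis using R.feckly_clean_elem_if_quotient_corner_unit_sum that by blast
  qed
  thus ?thesis unfolding feckly_clean_def by blast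
qed

end
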